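(* Let $K^n$ ($n\ge3$) be a finite $n$-dimensional pseudomanifold with a reflection $\vartheta$ and associated subcomplexes $K_+,K_-,K_0$, and let $\kappa>0$. If $\underline{w}_\pm\in\mathfrak{C}_\kappa(K_\pm)$ with $\pi_0\underline{w}_+=\pi_0\underline{w}_-$, then the assignment $\underline{w}$ on the edges of $K^n$ that agrees with $\underline{w}_+$ on edges of $K_+$ and with $\underline{w}_-$ on edges of $K_-$ lies in $\mathfrak{C}_\kappa(K^n)$. Moreover $\pi_0$ maps $\mathfrak{C}_\kappa(K^n)$ into $\mathfrak{C}_\kappa(K_0)$.
   Context: A finite simplicial complex is a finite vertex set with a family of nonempty subsets (simplexes) containing singletons and closed under nonempty subsets. An $n$-dimensional pseudomanifold: every simplex is a face of an $n$-simplex, every $(n-1)$-simplex is a face of at most two $n$-simplexes, any two $n$-simplexes are joined by a chain of $n$-simplexes with consecutive ones sharing an $(n-1)$-simplex. For a simplex $\sigma$ with vertices $0,\dots,k$ and edge values $z_{ij}>0$ ($z_{ii}=0$), $A(\underline{z}(\sigma))$ is the $k\times k$ matrix $a_{ij}=\tfrac12(z_{0i}+z_{0j}-z_{ij})$. A reflection is an involutive simplicial automorphism $\vartheta\neq\mathrm{id}$ of $K^n$ with subcomplexes $K_\pm$ that are $n$-dimensional pseudomanifolds, $K_-=\vartheta K_+$, $K_0=K_+\cap K_-$ a nonempty $(n-1)$-dimensional pseudomanifold on which $\vartheta$ is the identity, and every simplex of $K^n$ lies in $K_+$ or $K_-$. $\pi_\pm,\pi_0$ denote restriction of an edge assignment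 to the edges of $K_\pm$, $K_0$; $\underline{z}_\pm=\pi_\pm\underline{z}$; $\|\cdot\|$ is the Euclidean norm. The cut-off set for $K^n$ is $\mathfrak{C}_\kappa(K^n)=\{\underline{z}:\det A(\underline{z}(\sigma))\ge1/\kappa\text{ for all }\sigma\in K^n\text{ with }1\le\dim\sigma\le n,\ \max(\|\underline{z}_+\|,\|\underline{z}_-\|)\le\kappa\}$; for $L\in\{K_+,K_-,K_0\}$ of dimension $m$, $\mathfrak{C}_\kappa(L)=\{\underline{w}:\det A(\underline{w}(\sigma))\ge1/\kappa\text{ for all }\sigma\in L,\ 1\le\dim\sigma\le m,\ \|\underline{w}\|\le\kappa\}$. *)

theory Defs
  imports "HOL-Analysis.Analysis"
begin

text \<open>A finite simplicial complex is represented by its family of simplexes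
  K :: 'a set set; the vertex set is the union of K.\<close>

definition simplicial_complex :: "'a set set \<Rightarrow> bool" where
  "simplicial_complex K \<longleftrightarrow> finite K \<and>
     (\<forall>\<sigma>\<in>K. finite \<sigma> \<and> \<sigma> \<noteq> {}) \<and>
     (\<forall>\<sigma>\<in>K. \<forall>\<tau>. \<tau> \<subseteq> \<sigma> \<and> \<tau> \<noteq> {} \<longrightarrow> \<tau> \<in> K)"

definition sdim :: "'a set \<Rightarrow> nat" where
  "sdim \<sigma> = card \<sigma> - 1"

definition adjacent_top :: "nat \<Rightarrow> 'a set set \<Rightarrow> 'a set \<Rightarrow> 'a set \<Rightarrow> bool" where
  "adjacent_top n K \<tau> \<tau>' \<longleftrightarrow> \<tau> \<in> K \<and> \<tau>' \<in> K \<and> sdim \<tau> = n \<and> sdim \<tau>' = n \<and>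
     (\<exists>\<sigma>\<in>K. sdim \<sigma> = n - 1 \<and> \<sigma> \<subseteq> \<tau> \<and> \<sigma> \<subseteq> \<tau>')"

definition pseudomanifold :: "nat \<Rightarrow> 'a set set \<Rightarrow> bool" where
  "pseudomanifold n K \<longleftrightarrow> simplicial_complex K \<and> K \<noteq> {} \<and>
     (\<forall>\<sigma>\<in>K. \<exists>\<tau>\<in>K. sdim \<tau> = n \<and> \<sigma> \<subseteq> \<tau>) \<and>
     (\<forall>\<sigma>\<in>K. sdim \<sigma> = n - 1 \<longrightarrow> card {\<tau>\<in>K. sdim \<tau> = n \<and> \<sigma> \<subseteq> \<tau>} \<le> 2) \<and>
     (\<forall>\<tau>\<in>K. \<forall>\<tau>'\<in>K. sdim \<tau> = n \<and> sdim \<tau>' = n \<longrightarrow> (adjacent_top n K)\<^sup>*\<^sup>* \<tau> \<tau>')"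

definition simplicial_automorphism :: "'a set set \<Rightarrow> ('a \<Rightarrow> 'a) \<Rightarrow> bool" where
  "simplicial_automorphism K f \<longleftrightarrow> bij_betw f (\<Union>K) (\<Union>K) \<and>
     (\<forall>\<sigma>. \<sigma> \<subseteq> \<Union>K \<longrightarrow> (\<sigma> \<in> K \<longleftrightarrow> f ` \<sigma> \<in> K))"

definition reflection ::
  "nat \<Rightarrow> 'a set set \<Rightarrow> ('a \<Rightarrow> 'a) \<Rightarrow> 'a set set \<Rightarrow> 'a set set \<Rightarrow> 'a set set \<Rightarrow> bool" where
  "reflection n K \<theta> Kp Km K0 \<longleftrightarrow>
     simplicial_automorphism K \<theta> \<and>
     (\<forall>v\<in>\<Union>K. \<theta> (\<theta> v) = v) \<and> (\<exists>v\<in>\<Union>K. \<theta> v \<noteq> v) \<and>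
     Kp \<subseteq> K \<and> Km \<subseteq> K \<and>
     pseudomanifold n Kp \<and> pseudomanifold n Km \<and>
     Km = (\<lambda>\<sigma>. \<theta> ` \<sigma>) ` Kp \<and>
     K0 = Kp \<inter> Km \<and> K0 \<noteq> {} \<and> pseudomanifold (n - 1) K0 \<and>
     (\<forall>v\<in>\<Union>K0. \<theta> v = v) \<and>
     K = Kp \<union> Km"

definition edges :: "'a set set \<Rightarrow> 'a set set" where
  "edges L = {e\<in>L. card e = 2}"

text \<open>Edge assignments on L: functions on 2-element sets, positive on the edges of L
  and zero elsewhere (so an assignment is a vector indexed by edges L).\<close>
definition assignment :: "'a set set \<Rightarrow> ('a set \<Rightarrow> real) \<Rightarrow> bool" where
  "assignment L z \<longleftrightarrow> (\<forall>e\<in>edges L. z e > 0) \<and> (\<forall>e. e \<notin> edges L \<longrightarrow> z e = 0)"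

definition restr :: "'a set set \<Rightarrow> ('a set \<Rightarrow> real) \<Rightarrow> ('a set \<Rightarrow> real)" where
  "restr L z = (\<lambda>e. if e \<in> edges L then z e else 0)"

definition enorm :: "'a set set \<Rightarrow> ('a set \<Rightarrow> real) \<Rightarrow> real" where
  "enorm L z = sqrt (\<Sum>e\<in>edges L. (z e)\<^sup>2)"

definition zval :: "('a set \<Rightarrow> real) \<Rightarrow> 'a \<Rightarrow> 'a \<Rightarrow> real" where
  "zval z i j = (if i = j then 0 else z {i, j})"

definition det_on :: "'a set \<Rightarrow> ('a \<Rightarrow> 'a \<Rightarrow> real) \<Rightarrow> real" where
  "det_on S a = (\<Sum>p\<in>{p. p permutes S}. of_int (sign p) * (\<Prod>i\<in>S. a i (p i)))"

text \<open>det A(z(\<sigma>)): vertices of \<sigma> labelled in increasing order, vertex 0 = Min \<sigma>.\<close>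
definition detA :: "('a::linorder set \<Rightarrow> real) \<Rightarrow> 'a set \<Rightarrow> real" where
  "detA z \<sigma> = (let v0 = Min \<sigma> in
     det_on (\<sigma> - {v0}) (\<lambda>i j. (zval z v0 i + zval z v0 j - zval z i j) / 2))"

definition cutoff :: "real \<Rightarrow> nat \<Rightarrow> 'a::linorder set set \<Rightarrow> ('a set \<Rightarrow> real) set" where
  "cutoff \<kappa> m L = {w. assignment L w \<and>
      (\<forall>\<sigma>\<in>L. 1 \<le> sdim \<sigma> \<and> sdim \<sigma> \<le> m \<longrightarrow> detA w \<sigma> \<ge> 1 / \<kappa>) \<and> enorm L w \<le> \<kappa>}"

definition cutoffK :: "real \<Rightarrow> nat \<Rightarrow> 'a::linorder set set \<Rightarrow> 'a set set \<Rightarrow> 'a set set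
    \<Rightarrow> ('a set \<Rightarrow> real) set" where
  "cutoffK \<kappa> n K Kp Km = {z. assignment K z \<and>
      (\<forall>\<sigma>\<in>K. 1 \<le> sdim \<sigma> \<and> sdim \<sigma> \<le> n \<longrightarrow> detA z \<sigma> \<ge> 1 / \<kappa>) \<and>
      max (enorm Kp z) (enorm Km z) \<le> \<kappa>}"

definition glue :: "'a set set \<Rightarrow> 'a set set \<Rightarrow> ('a set \<Rightarrow> real) \<Rightarrow> ('a set \<Rightarrow> real)
    \<Rightarrow> ('a set \<Rightarrow> real)" where
  "glue Kp Km wp wm = (\<lambda>e. if e \<in> edges Kp then wp e else if e \<in> edges Km then wm e else 0)"

end

theory Submission
  imports Defs
begin

text \<open>Both claims are local: \<open>detA z \<sigma>\<close> only reads \<open>z\<close> on the edges of \<open>\<sigma>\<close>, and every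
  simplex of \<open>K = K\<^sub>+ \<union> K\<^sub>-\<close> lies in one half, on whose edges the glued assignment coincides
  with \<open>w\<^sub>+\<close> or \<open>w\<^sub>-\<close>. For the projection, \<open>K\<^sub>0 \<subseteq> K\<^sub>+\<close> bounds the norm on \<open>K\<^sub>0\<close> by the norm
  on \<open>K\<^sub>+\<close>.\<close>

lemma detA_cong:
  assumes "finite \<sigma>" "\<sigma> \<noteq> {}"
    and "\<And>a b. a \<in> \<sigma> \<Longrightarrow> b \<in> \<sigma> \<Longrightarrow> a \<noteq> b \<Longrightarrow> z {a, b} = z' {a, b}"
  shows "detA z \<sigma> = detA z' \<sigma>"
proof -
  have zval_eq: "zval z a b = zval z' a b" if "a \<in> \<sigma>" "b \<in> \<sigma>" for a b
    using assms(3) that by (simp add: zval_def)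
  have "Min \<sigma> \<in> \<sigma>" using assms(1,2) by simp
  have prod_eq: "(\<Prod>i\<in>\<sigma> - {Min \<sigma>}. (zval z (Min \<sigma>) i + zval z (Min \<sigma>) (p i) - zval z i (p i)) / 2)
      = (\<Prod>i\<in>\<sigma> - {Min \<sigma>}. (zval z' (Min \<sigma>) i + zval z' (Min \<sigma>) (p i) - zval z' i (p i)) / 2)"
    if "p permutes \<sigma> - {Min \<sigma>}" for p
  proof (rule prod.cong[OF refl])
    fix i assume i: "i \<in> \<sigma> - {Min \<sigma>}"
    then have "p i \<in> \<sigma> - {Min \<sigma>}" using that by (simp only: permutes_in_image)
    then show "(zval z (Min \<sigma>) i + zval z (Min \<sigma>) (p i) - zval z i (p i)) / 2
        = (zval z' (Min \<sigma>) i + zval z' (Min \<sigma>) (p i) - zval z' i (p i)) / 2"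
      using i \<open>Min \<sigma> \<in> \<sigma>\<close> zval_eq by simp
  qed
  show ?thesis
    unfolding detA_def Let_def det_on_def by (intro sum.cong refl) (simp add: prod_eq)
qed

lemma simplicial_complex_simplex_finite:
  "simplicial_complex L \<Longrightarrow> \<sigma> \<in> L \<Longrightarrow> finite \<sigma> \<and> \<sigma> \<noteq> {}"
  unfolding simplicial_complex_def by (elim conjE) simp

lemma simplicial_complex_finite_edges: "simplicial_complex L \<Longrightarrow> finite (edges L)"
  unfolding simplicial_complex_def edges_def by simp

lemma simplicial_complex_edge_of_simplex:
  assumes "simplicial_complex L" "\<sigma> \<in> L" "a \<in> \<sigma>" "b \<in> \<sigma>" "a \<noteq> b"
  shows "{a, b} \<in> edges L"
proof -
  have "\<forall>\<sigma>\<in>L. \<forall>\<tau>. \<tau> \<subseteq> \<sigma> \<and> \<tau> \<noteq> {} \<longrightarrow> \<tau> \<in> L"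
    using assms(1) unfolding simplicial_complex_def by (elim conjE)
  moreover have "{a, b} \<subseteq> \<sigma>" using assms(3,4) by simp
  ultimately have "{a, b} \<in> L" using assms(2) by simp
  then show ?thesis using assms(5) by (simp add: edges_def)
qed

lemma detA_cong_edges:
  assumes "simplicial_complex L" "\<sigma> \<in> L" "\<And>e. e \<in> edges L \<Longrightarrow> z e = z' e"
  shows "detA z \<sigma> = detA z' \<sigma>"
  using simplicial_complex_simplex_finite[OF assms(1,2)]
    simplicial_complex_edge_of_simplex[OF assms(1,2)] assms(3)
  by (intro detA_cong) auto

lemma enorm_cong: "(\<And>e. e \<in> edges L \<Longrightarrow> z e = z' e) \<Longrightarrow> enorm L z = enorm L z'"
  unfolding enorm_def by simp

lemma enorm_mono:
  assumes "finite (edges L')" "edges L \<subseteq> edges L'"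
  shows "enorm L z \<le> enorm L' z"
  unfolding enorm_def using assms by (intro real_sqrt_le_mono sum_mono2) auto

lemma edges_Un: "edges (A \<union> B) = edges A \<union> edges B"
  by (auto simp: edges_def)

lemma edges_mono: "A \<subseteq> B \<Longrightarrow> edges A \<subseteq> edges B"
  by (auto simp: edges_def)

lemma glue_left: "e \<in> edges Kp \<Longrightarrow> glue Kp Km wp wm e = wp e"
  by (simp add: glue_def)

lemma glue_right:
  "(\<And>e. e \<in> edges Kp \<Longrightarrow> e \<in> edges Km \<Longrightarrow> wp e = wm e) \<Longrightarrow> e \<in> edges Km \<Longrightarrow>
    glue Kp Km wp wm e = wm e"
  by (simp add: glue_def)

lemma glue_in_cutoffK:
  assumes "simplicial_complex Kp" "simplicial_complex Km"
    and "wp \<in> cutoff \<kappa> n Kp" "wm \<in> cutoff \<kappa> n Km"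
    and agree: "\<And>e. e \<in> edges Kp \<Longrightarrow> e \<in> edges Km \<Longrightarrow> wp e = wm e"
  shows "glue Kp Km wp wm \<in> cutoffK \<kappa> n (Kp \<union> Km) Kp Km"
proof -
  define g where "g = glue Kp Km wp wm"
  have gp: "g e = wp e" if "e \<in> edges Kp" for e
    using that unfolding g_def by (rule glue_left)
  have gm: "g e = wm e" if "e \<in> edges Km" for e
    using agree that unfolding g_def by (rule glue_right)
  have "assignment (Kp \<union> Km) g"
    using assms(3,4) gp gm unfolding assignment_def cutoff_def edges_Un
    by (auto simp: g_def glue_def)
  moreover have "detA g \<sigma> \<ge> 1 / \<kappa>"
    if "\<sigma> \<in> Kp \<union> Km" "1 \<le> sdim \<sigma>" "sdim \<sigma> \<le> n" for \<sigma>
  proof (cases "\<sigma> \<in> Kp")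
    case True
    have "detA g \<sigma> = detA wp \<sigma>" using assms(1) True gp by (rule detA_cong_edges)
    then show ?thesis using assms(3) True that by (simp add: cutoff_def)
  next
    case False
    then have "\<sigma> \<in> Km" using that(1) by simp
    have "detA g \<sigma> = detA wm \<sigma>" using assms(2) \<open>\<sigma> \<in> Km\<close> gm by (rule detA_cong_edges)
    then show ?thesis using assms(4) \<open>\<sigma> \<in> Km\<close> that by (simp add: cutoff_def)
  qed
  moreover have "enorm Kp g = enorm Kp wp" "enorm Km g = enorm Km wm"
    using gp gm by (auto intro: enorm_cong)
  ultimately show ?thesis
    using assms(3,4) unfolding g_def[symmetric] cutoffK_def cutoff_def by simp
qed

lemma restr_in_cutoff:
  assumes "simplicial_complex L" "simplicial_complex Kp"
    and "L \<subseteq> Kp" "Kp \<subseteq> K" "m \<le> n"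
    and z: "z \<in> cutoffK \<kappa> n K Kp Km"
  shows "restr L z \<in> cutoff \<kappa> m L"
proof -
  have restr_eq: "restr L z e = z e" if "e \<in> edges L" for e
    using that by (simp add: restr_def)
  have "edges L \<subseteq> edges K" using assms(3,4) edges_mono by blast
  then have "assignment L (restr L z)"
    using z unfolding cutoffK_def assignment_def restr_def by auto
  moreover have "detA (restr L z) \<sigma> \<ge> 1 / \<kappa>"
    if "\<sigma> \<in> L" "1 \<le> sdim \<sigma>" "sdim \<sigma> \<le> m" for \<sigma>
  proof -
    have "detA (restr L z) \<sigma> = detA z \<sigma>"
      using assms(1) that(1) restr_eq by (rule detA_cong_edges)
    then show ?thesis using z assms(3-5) that by (auto simp: cutoffK_def)
  qed
  moreover have "enorm L (restr L z) \<le> \<kappa>"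
  proof -
    have "enorm L (restr L z) = enorm L z" using restr_eq by (rule enorm_cong)
    also have "\<dots> \<le> enorm Kp z"
      using assms(2,3) by (intro enorm_mono simplicial_complex_finite_edges edges_mono)
    also have "\<dots> \<le> \<kappa>" using z by (simp add: cutoffK_def)
    finally show ?thesis .
  qed
  ultimately show ?thesis by (simp add: cutoff_def)
qed

theorem lemmaA2:
  fixes K Kp Km K0 :: "'a::linorder set set" and \<theta> :: "'a \<Rightarrow> 'a"
    and n :: nat and \<kappa> :: real and wp wm :: "'a set \<Rightarrow> real"
  assumes "n \<ge> 3"
    and "pseudomanifold n K"
    and "reflection n K \<theta> Kp Km K0"
    and "\<kappa> > 0"
    and "wp \<in> cutoff \<kappa> n Kp" and "wm \<in> cutoff \<kappa> n Km"
    and "restr K0 wp = restr K0 wm"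
  shows "glue Kp Km wp wm \<in> cutoffK \<kappa> n K Kp Km \<and>
         restr K0 ` cutoffK \<kappa> n K Kp Km \<subseteq> cutoff \<kappa> (n - 1) K0"
proof
  have halves: "K = Kp \<union> Km" "K0 = Kp \<inter> Km"
    and complexes: "simplicial_complex Kp" "simplicial_complex Km" "simplicial_complex K0"
    using assms(3) unfolding reflection_def pseudomanifold_def by blast+
  have "wp e = wm e" if "e \<in> edges Kp" "e \<in> edges Km" for e
  proof -
    have "e \<in> edges K0" using that halves(2) by (auto simp: edges_def)
    then show ?thesis using fun_cong[OF assms(7), of e] by (simp add: restr_def)
  qed
  then show "glue Kp Km wp wm \<in> cutoffK \<kappa> n K Kp Km"
    using glue_in_cutoffK[OF complexes(1,2) assms(5,6)] halves(1) by simp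
  show "restr K0 ` cutoffK \<kappa> n K Kp Km \<subseteq> cutoff \<kappa> (n - 1) K0"
    using halves by (intro image_subsetI restr_in_cutoff[OF complexes(3,1)]) auto
qed

end
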